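(* Every commutative monoid $S$ that is artinian (i.e. $S_S$ satisfies the descending chain condition on congruences) satisfies condition $A$.
   Context: A monoid $S$ satisfies condition $A$ if every right $S$-act satisfies the ascending chain condition on cyclic subacts. A congruence on $S_S$ is an equivalence relation $\rho$ on $S$ with $a\,\rho\,b\Rightarrow as\,\rho\,bs$ for all $s\in S$. *)

theory Defs
  imports Main
begin

definition right_act :: "'x set \<Rightarrow> ('x \<Rightarrow> 's::monoid_mult \<Rightarrow> 'x) \<Rightarrow> bool" where
  "right_act X act \<longleftrightarrow>
     (\<forall>x\<in>X. \<forall>s. act x s \<in> X) \<and>
     (\<forall>x\<in>X. act x 1 = x) \<and>
     (\<forall>x\<in>X. \<forall>s t. act (act x s) t = act x (s * t))"

definition cyclic_subact :: "('x \<Rightarrow> 's::monoid_mult \<Rightarrow> 'x) \<Rightarrow> 'x \<Rightarrow> 'x set" where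
  "cyclic_subact act x = range (act x)"

definition acc_cyclic_subacts :: "'x set \<Rightarrow> ('x \<Rightarrow> 's::monoid_mult \<Rightarrow> 'x) \<Rightarrow> bool" where
  "acc_cyclic_subacts X act \<longleftrightarrow>
     (\<forall>f :: nat \<Rightarrow> 'x. (\<forall>n. f n \<in> X) \<and>
        (\<forall>n. cyclic_subact act (f n) \<subseteq> cyclic_subact act (f (Suc n))) \<longrightarrow>
        (\<exists>N. \<forall>n\<ge>N. cyclic_subact act (f n) = cyclic_subact act (f N)))"

definition right_congruence :: "('s::monoid_mult \<times> 's) set \<Rightarrow> bool" where
  "right_congruence \<rho> \<longleftrightarrow> equiv UNIV \<rho> \<and> (\<forall>a b s. (a, b) \<in> \<rho> \<longrightarrow> (a * s, b * s) \<in> \<rho>)"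

definition artinian :: "'s::monoid_mult itself \<Rightarrow> bool" where
  "artinian _ \<longleftrightarrow>
     (\<forall>r :: nat \<Rightarrow> ('s \<times> 's) set. (\<forall>n. right_congruence (r n)) \<and> (\<forall>n. r (Suc n) \<subseteq> r n) \<longrightarrow>
        (\<exists>N. \<forall>n\<ge>N. r n = r N))"

end

theory Submission
  imports Defs
begin

text \<open>An ascending chain of cyclic subacts x_n S yields a descending chain of kernels
  ker x_n = {(a, b). x_n a = x_n b}, which stabilises. It remains to see that x S \<subseteq> y S with
  ker x = ker y forces x S = y S. Write x = y t. Pulling back the Rees congruences of the
  descending subacts y t^k S \<subseteq> y S gives a descending chain of congruences on S; at a stable
  index K the pair (t^K, t^(K+1)) yields y t^K = y t^(K+1) u, and cancelling t^K, which is possible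
  because ker (y t) = ker y, leaves y = y t u \<in> x S.\<close>

lemma right_act_closed: "right_act X act \<Longrightarrow> x \<in> X \<Longrightarrow> act x s \<in> X"
  unfolding right_act_def by blast

lemma right_act_one: "right_act X act \<Longrightarrow> x \<in> X \<Longrightarrow> act x 1 = x"
  unfolding right_act_def by blast

lemma right_act_assoc: "right_act X act \<Longrightarrow> x \<in> X \<Longrightarrow> act (act x s) t = act x (s * t)"
  unfolding right_act_def by blast

lemma self_mem_cyclic_subact: "right_act X act \<Longrightarrow> x \<in> X \<Longrightarrow> x \<in> cyclic_subact act x"
  unfolding cyclic_subact_def by (metis rangeI right_act_one)

lemma cyclic_subact_act_subset:
  "right_act X act \<Longrightarrow> x \<in> X \<Longrightarrow> cyclic_subact act (act x s) \<subseteq> cyclic_subact act x"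
  unfolding cyclic_subact_def by (auto simp: right_act_assoc)

lemma ascending_cyclic_subacts_generator:
  assumes ra: "right_act X act" and fX: "\<forall>n. f n \<in> X"
    and chain: "\<forall>n. cyclic_subact act (f n) \<subseteq> cyclic_subact act (f (Suc n))"
    and "m \<le> n"
  shows "\<exists>s. f m = act (f n) s"
proof -
  have "cyclic_subact act (f m) \<subseteq> cyclic_subact act (f n)"
    using lift_Suc_mono_le[of "\<lambda>n. cyclic_subact act (f n)", OF chain[rule_format] \<open>m \<le> n\<close>] .
  moreover have "f m \<in> cyclic_subact act (f m)"
    using self_mem_cyclic_subact[OF ra fX[rule_format]] .
  ultimately show ?thesis
    unfolding cyclic_subact_def by blast
qed

lemma artinian_stabilises:
  assumes "artinian TYPE('s::monoid_mult)"
    and "\<And>n. right_congruence (r n :: ('s \<times> 's) set)" and "\<And>n. r (Suc n) \<subseteq> r n"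
  obtains N where "\<And>n. N \<le> n \<Longrightarrow> r n = r N"
  using assms unfolding artinian_def by blast

definition act_kernel :: "('x \<Rightarrow> 's::monoid_mult \<Rightarrow> 'x) \<Rightarrow> 'x \<Rightarrow> ('s \<times> 's) set" where
  "act_kernel act x = {(a, b). act x a = act x b}"

text \<open>Pull-back to S, along s \<mapsto> y s, of the Rees congruence that collapses Y \<inter> y S.\<close>
definition rees_kernel :: "('x \<Rightarrow> 's::monoid_mult \<Rightarrow> 'x) \<Rightarrow> 'x \<Rightarrow> 'x set \<Rightarrow> ('s \<times> 's) set" where
  "rees_kernel act y Y = {(a, b). act y a = act y b \<or> (act y a \<in> Y \<and> act y b \<in> Y)}"

lemma right_congruence_act_kernel:
  assumes "right_act X act" and "x \<in> X"
  shows "right_congruence (act_kernel act x)"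
  unfolding right_congruence_def act_kernel_def equiv_def refl_on_def sym_def trans_def
  by (auto simp: right_act_assoc[OF assms, symmetric])

lemma right_congruence_rees_kernel:
  assumes ra: "right_act X act" and y: "y \<in> X" and closed: "\<And>z s. z \<in> Y \<Longrightarrow> act z s \<in> Y"
  shows "right_congruence (rees_kernel act y Y)"
  unfolding right_congruence_def
proof
  show "equiv UNIV (rees_kernel act y Y)"
    unfolding equiv_def refl_on_def sym_def trans_def rees_kernel_def by auto
  have "act y (a * s) = act (act y a) s" for a s
    using right_act_assoc[OF ra y] by simp
  then show "\<forall>a b s. (a, b) \<in> rees_kernel act y Y \<longrightarrow> (a * s, b * s) \<in> rees_kernel act y Y"
    unfolding rees_kernel_def using closed by auto
qed

lemma act_kernel_antimono:
  fixes act :: "'x \<Rightarrow> 's::comm_monoid_mult \<Rightarrow> 'x"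
  assumes "right_act X act" and "x \<in> X"
  shows "act_kernel act x \<subseteq> act_kernel act (act x s)"
proof (clarify)
  fix a b
  assume "(a, b) \<in> act_kernel act x"
  then have "act (act x a) s = act (act x b) s"
    unfolding act_kernel_def by simp
  then show "(a, b) \<in> act_kernel act (act x s)"
    unfolding act_kernel_def by (simp add: right_act_assoc[OF assms] mult.commute)
qed

lemma act_power_cancel:
  fixes act :: "'x \<Rightarrow> 's::comm_monoid_mult \<Rightarrow> 'x"
  assumes ra: "right_act X act" and y: "y \<in> X"
    and ker: "act_kernel act (act y t) = act_kernel act y"
    and eq: "act y (t ^ k * a) = act y (t ^ k * b)"
  shows "act y a = act y b"
  using eq
proof (induction k arbitrary: a b)
  case 0
  then show ?case by simp
next
  case (Suc k)
  have "act y (t ^ k * (t * a)) = act y (t ^ k * (t * b))"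
    using Suc.prems by (simp add: ac_simps)
  then have "act y (t * a) = act y (t * b)"
    by (rule Suc.IH)
  then have "(a, b) \<in> act_kernel act (act y t)"
    unfolding act_kernel_def by (simp add: right_act_assoc[OF ra y])
  then show ?case
    using ker unfolding act_kernel_def by simp
qed

lemma mem_cyclic_subact_if_act_kernel_eq:
  fixes act :: "'x \<Rightarrow> 's::comm_monoid_mult \<Rightarrow> 'x"
  assumes art: "artinian TYPE('s)" and ra: "right_act X act" and y: "y \<in> X"
    and ker: "act_kernel act (act y t) = act_kernel act y"
  shows "y \<in> cyclic_subact act (act y t)"
proof -
  define Y where "Y k = cyclic_subact act (act y (t ^ k))" for k
  define R where "R k = rees_kernel act y (Y k)" for k
  have Y_mem: "act y (t ^ k * u) \<in> Y k" for k u
    unfolding Y_def cyclic_subact_def by (simp add: right_act_assoc[OF ra y])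
  have Y_elim: "\<exists>u. z = act y (t ^ k * u)" if "z \<in> Y k" for z k
    using that unfolding Y_def cyclic_subact_def by (auto simp: right_act_assoc[OF ra y])
  have "right_congruence (R k)" for k
    unfolding R_def
  proof (rule right_congruence_rees_kernel[OF ra y])
    fix z s
    assume "z \<in> Y k"
    then obtain u where "z = act y (t ^ k * u)"
      using Y_elim by blast
    then have "act z s = act y (t ^ k * (u * s))"
      by (simp add: right_act_assoc[OF ra y] mult.assoc)
    then show "act z s \<in> Y k"
      using Y_mem by simp
  qed
  moreover have "R (Suc k) \<subseteq> R k" for k
  proof -
    have "Y (Suc k) \<subseteq> Y k"
    proof
      fix z
      assume "z \<in> Y (Suc k)"
      then obtain u where "z = act y (t ^ Suc k * u)"
        using Y_elim by blast
      then have "z = act y (t ^ k * (t * u))"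
        by (simp add: ac_simps)
      then show "z \<in> Y k"
        using Y_mem by simp
    qed
    then show ?thesis
      unfolding R_def rees_kernel_def by auto
  qed
  ultimately obtain K where K: "\<And>n. K \<le> n \<Longrightarrow> R n = R K"
    using artinian_stabilises[OF art] by blast
  have "(t ^ K, t ^ Suc K) \<in> R K"
    unfolding R_def rees_kernel_def using Y_mem[of K 1] Y_mem[of K t] by (simp add: mult.commute)
  then have "(t ^ K, t ^ Suc K) \<in> R (Suc K)"
    using K[of "Suc K"] by simp
  then have "act y (t ^ K) \<in> Y (Suc K)"
    unfolding R_def rees_kernel_def using Y_mem[of "Suc K" 1] by auto
  then obtain u where "act y (t ^ K) = act y (t ^ Suc K * u)"
    using Y_elim by blast
  then have "act y (t ^ K * 1) = act y (t ^ K * (t * u))"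
    by (simp add: ac_simps)
  then have "act y 1 = act y (t * u)"
    using act_power_cancel[OF ra y ker] by blast
  then have "y = act (act y t) u"
    by (simp add: right_act_one[OF ra y] right_act_assoc[OF ra y])
  then show ?thesis
    unfolding cyclic_subact_def by blast
qed

lemma cyclic_subact_eq_if_act_kernel_eq:
  fixes act :: "'x \<Rightarrow> 's::comm_monoid_mult \<Rightarrow> 'x"
  assumes "artinian TYPE('s)" and ra: "right_act X act" and y: "y \<in> X"
    and "act_kernel act (act y t) = act_kernel act y"
  shows "cyclic_subact act (act y t) = cyclic_subact act y"
proof
  show "cyclic_subact act (act y t) \<subseteq> cyclic_subact act y"
    using cyclic_subact_act_subset[OF ra y] .
  obtain u where u: "y = act (act y t) u"
    using mem_cyclic_subact_if_act_kernel_eq[OF assms] unfolding cyclic_subact_def by blast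
  have "cyclic_subact act (act (act y t) u) \<subseteq> cyclic_subact act (act y t)"
    using cyclic_subact_act_subset[OF ra right_act_closed[OF ra y]] .
  then show "cyclic_subact act y \<subseteq> cyclic_subact act (act y t)"
    by (simp only: u[symmetric])
qed

theorem mainTheorem17:
  fixes X :: "'x set" and act :: "'x \<Rightarrow> 's::comm_monoid_mult \<Rightarrow> 'x"
  assumes "artinian TYPE('s)"
    and "right_act X act"
  shows "acc_cyclic_subacts X act"
  unfolding acc_cyclic_subacts_def
proof (intro allI impI, elim conjE)
  fix f :: "nat \<Rightarrow> 'x"
  assume fX: "\<forall>n. f n \<in> X"
    and chain: "\<forall>n. cyclic_subact act (f n) \<subseteq> cyclic_subact act (f (Suc n))"
  have generator: "\<exists>s. f m = act (f n) s" if "m \<le> n" for m n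
    using ascending_cyclic_subacts_generator[OF assms(2) fX chain that] .
  have "act_kernel act (f (Suc n)) \<subseteq> act_kernel act (f n)" for n
  proof -
    obtain s where s: "f n = act (f (Suc n)) s"
      using generator[OF lessI[THEN less_imp_le]] by blast
    show ?thesis
      unfolding s by (rule act_kernel_antimono[OF assms(2) fX[rule_format]])
  qed
  moreover have "right_congruence (act_kernel act (f n))" for n
    using right_congruence_act_kernel[OF assms(2) fX[rule_format]] .
  ultimately obtain N where N: "\<And>n. N \<le> n \<Longrightarrow> act_kernel act (f n) = act_kernel act (f N)"
    using artinian_stabilises[OF assms(1), of "\<lambda>n. act_kernel act (f n)"] by blast
  have "cyclic_subact act (f n) = cyclic_subact act (f N)" if nN: "N \<le> n" for n
  proof -
    obtain t where t: "f N = act (f n) t"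
      using generator[OF nN] by blast
    have "act_kernel act (act (f n) t) = act_kernel act (f n)"
      using N[OF nN] by (simp only: t)
    then have "cyclic_subact act (act (f n) t) = cyclic_subact act (f n)"
      by (rule cyclic_subact_eq_if_act_kernel_eq[OF assms fX[rule_format]])
    then show ?thesis
      by (simp only: t)
  qed
  then show "\<exists>N. \<forall>n\<ge>N. cyclic_subact act (f n) = cyclic_subact act (f N)"
    by blast
qed

end
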